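(* Let $\mathcal R$ be a DCTRS and let $\langle s,\pi\rangle$, $\langle t,\pi'\rangle$ be safe pairs. For all $k,m\ge0$: $\langle s,\pi\rangle\rightharpoonup_{\mathcal R_k}^{m}\langle t,\pi'\rangle$ if and only if $\langle t,\pi'\rangle\leftharpoondown_{\mathcal R_k}^{m}\langle s,\pi\rangle$.
   Context: Terms $\mathcal T(\mathcal F,\mathcal V)$; $\mathrm{Pos}(t)$ positions ($\epsilon$ root), $t|_p$ subterm, $t[u]_p$ replacement, $\mathrm{Var}(t_1,\dots,t_n)$ the variables occurring in the $t_i$, $\mathrm{Dom}(\sigma)=\{x\mid x\sigma\ne x\}$, $\sigma|_V$ restriction. A DCTRS $\mathcal R$ is a finite set of labelled conditional rules $\beta: l\to r\Leftarrow s_1\twoheadrightarrow t_1,\dots,s_n\twoheadrightarrow t_n$ ($l\notin\mathcal V$) with $\mathrm{Var}(r)\subseteq\mathrm{Var}(l,s_1,\dots,s_n,t_1,\dots,t_n)$ and $\mathrm{Var}(s_i)\subseteq\mathrm{Var}(l,t_1,\dots,t_{i-1})$ for all $i$; labels are unique and rule variables are never renamed. For such a rule let $V_\beta=(\mathrm{Var}(l)\setminus\mathrm{Var}(r,s_1,\dots,s_n,t_1,\dots,t_n))\cup\bigcup_{i=1}^n(\mathrm{Var}(t_i)\setminus\mathrm{Var}(r,s_{i+1},\dots,s_n))$. Traces: $[\,]$ is a trace, and if $\pi,\pi_1,\dots,\pi_n$ are traces, $\beta$ labels a rule with $n$ conditions, $p$ is a position and $\sigma$ a ground substitution, then $\beta(p,\sigma,\pi_1,\dots,\pi_n):\pi$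 is a trace. A trace $\pi$ is safe iff for every trace term $\beta(p,\sigma,\pi_1,\dots,\pi_n)$ in $\pi$, $\sigma$ is ground with $\mathrm{Dom}(\sigma)=V_\beta$ and $\pi_1,\dots,\pi_n$ are safe; $\langle s,\pi\rangle$ ($s$ ground) is safe iff $\pi$ is. Depth-indexed relations on safe pairs: $\rightharpoonup_{\mathcal R_0}$ and $\leftharpoondown_{\mathcal R_0}$ are empty. $\langle s,\pi\rangle\rightharpoonup_{\mathcal R_{k+1}}\langle t,\beta(p,\sigma',\pi_1,\dots,\pi_n):\pi\rangle$ iff there are $p\in\mathrm{Pos}(s)$, rule $\beta$ and ground $\sigma$ with $s|_p=l\sigma$, $\langle s_i\sigma,[\,]\rangle\rightharpoonup_{\mathcal R_k}^{*}\langle t_i\sigma,\pi_i\rangle$ for all $i$, $t=s[r\sigma]_p$, $\sigma'=\sigma|_{V_\beta}$. $\langle t,\beta(p,\sigma',\pi_1,\dots,\pi_n):\pi\rangle\leftharpoondown_{\mathcal R_{k+1}}\langle s,\pi\rangle$ iff this pair is safe, $\beta: l\to r\Leftarrow s_1\twoheadrightarrow t_1,\dots,s_n\twoheadrightarrow t_n\in\mathcal R$, and there is a ground $\theta$ with $\mathrm{Dom}(\theta)=\mathrm{Var}(r,s_1,\dots,s_n)\setminus\mathrm{Dom}(\sigma')$, $t|_p=r\theta$, $\langle t_i\theta\sigma',\pi_i\rangle\leftharpoondown_{\mathcal R_k}^{*}\langle s_i\theta\sigma',[\,]\rangle$ for all $i$, and $s=t[l\theta\sigma']_p$. ($\rightharpoonup_{\mathcal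 R}=\bigcup_k\rightharpoonup_{\mathcal R_k}$, $\leftharpoondown_{\mathcal R}=\bigcup_k\leftharpoondown_{\mathcal R_k}$.) $\to^{m}$ denotes exactly $m$ steps. *)

theory Defs
  imports Main
begin

datatype ('f, 'v) "term" = Var 'v | Fun 'f "('f, 'v) term list"

type_synonym pos = "nat list"

fun vars_term :: "('f, 'v) term \<Rightarrow> 'v set" where
  "vars_term (Var x) = {x}"
| "vars_term (Fun f ts) = (\<Union>t \<in> set ts. vars_term t)"

definition ground :: "('f, 'v) term \<Rightarrow> bool" where
  "ground t \<longleftrightarrow> vars_term t = {}"

function poss :: "('f, 'v) term \<Rightarrow> pos set" where
  "poss (Var x) = {[]}"
| "poss (Fun f ts) = {[]} \<union> (\<Union>(i, t) \<in> set (zip [0..<length ts] ts). (\<lambda>p. i # p) ` poss t)"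
  by pat_completeness auto
termination
  by (relation "measure size") (auto dest!: set_zip_rightD simp: less_Suc_eq_le intro: size_list_estimation')

fun subt_at :: "('f, 'v) term \<Rightarrow> pos \<Rightarrow> ('f, 'v) term" where
  "subt_at t [] = t"
| "subt_at (Fun f ts) (i # p) = (if i < length ts then subt_at (ts ! i) p else Fun f ts)"
| "subt_at (Var x) (i # p) = Var x"

fun replace_at :: "('f, 'v) term \<Rightarrow> pos \<Rightarrow> ('f, 'v) term \<Rightarrow> ('f, 'v) term" where
  "replace_at t [] u = u"
| "replace_at (Fun f ts) (i # p) u =
     (if i < length ts then Fun f (ts[i := replace_at (ts ! i) p u]) else Fun f ts)"
| "replace_at (Var x) (i # p) u = Var x"

type_synonym ('f, 'v) subst = "'v \<Rightarrow> ('f, 'v) term"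

fun subst_apply :: "('f, 'v) term \<Rightarrow> ('f, 'v) subst \<Rightarrow> ('f, 'v) term" (infixl "\<cdot>" 67) where
  "Var x \<cdot> \<sigma> = \<sigma> x"
| "Fun f ts \<cdot> \<sigma> = Fun f (map (\<lambda>t. t \<cdot> \<sigma>) ts)"

definition subst_dom :: "('f, 'v) subst \<Rightarrow> 'v set" where
  "subst_dom \<sigma> = {x. \<sigma> x \<noteq> Var x}"

definition subst_restrict :: "('f, 'v) subst \<Rightarrow> 'v set \<Rightarrow> ('f, 'v) subst" where
  "subst_restrict \<sigma> V = (\<lambda>x. if x \<in> V then \<sigma> x else Var x)"

definition ground_subst :: "('f, 'v) subst \<Rightarrow> bool" where
  "ground_subst \<sigma> \<longleftrightarrow> (\<forall>x \<in> subst_dom \<sigma>. ground (\<sigma> x))"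

text \<open>A conditional rule l -> r <= s1 ->> t1, ..., sn ->> tn.\<close>
record ('f, 'v) crule =
  lhs :: "('f, 'v) term"
  rhs :: "('f, 'v) term"
  conds :: "(('f, 'v) term \<times> ('f, 'v) term) list"

definition vars_terms :: "('f, 'v) term list \<Rightarrow> 'v set" where
  "vars_terms ts = (\<Union>t \<in> set ts. vars_term t)"

definition dctrs_rule :: "('f, 'v) crule \<Rightarrow> bool" where
  "dctrs_rule \<rho> \<longleftrightarrow>
     (\<forall>x. lhs \<rho> \<noteq> Var x) \<and>
     vars_term (rhs \<rho>) \<subseteq> vars_terms (lhs \<rho> # map fst (conds \<rho>) @ map snd (conds \<rho>)) \<and>
     (\<forall>i < length (conds \<rho>).
        vars_term (fst (conds \<rho> ! i)) \<subseteq> vars_terms (lhs \<rho> # map snd (take i (conds \<rho>))))"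

definition dctrs :: "('l \<times> ('f, 'v) crule) set \<Rightarrow> bool" where
  "dctrs R \<longleftrightarrow> finite R \<and>
     (\<forall>\<beta> \<rho> \<rho>'. (\<beta>, \<rho>) \<in> R \<longrightarrow> (\<beta>, \<rho>') \<in> R \<longrightarrow> \<rho> = \<rho>') \<and>
     (\<forall>(\<beta>, \<rho>) \<in> R. dctrs_rule \<rho>)"

definition V_rule :: "('f, 'v) crule \<Rightarrow> 'v set" where
  "V_rule \<rho> = (let cs = conds \<rho>; n = length cs in
     (vars_term (lhs \<rho>) - vars_terms (rhs \<rho> # map fst cs @ map snd cs)) \<union>
     (\<Union>i < n. vars_term (snd (cs ! i)) - vars_terms (rhs \<rho> # map fst (drop (Suc i) cs))))"

text \<open>A trace term beta(p, sigma, pi_1, ..., pi_n); a trace is a list of trace terms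
  (the empty list is the empty trace, and "tt : pi" is list cons).\<close>
datatype ('l, 'f, 'v) trace_term =
  TT 'l pos "('f, 'v) subst" "('l, 'f, 'v) trace_term list list"

type_synonym ('l, 'f, 'v) trace = "('l, 'f, 'v) trace_term list"

fun safe_tt :: "('l \<times> ('f, 'v) crule) set \<Rightarrow> ('l, 'f, 'v) trace_term \<Rightarrow> bool" where
  "safe_tt R (TT \<beta> p \<sigma> \<pi>s) \<longleftrightarrow>
     (\<exists>\<rho>. (\<beta>, \<rho>) \<in> R \<and> length \<pi>s = length (conds \<rho>) \<and>
          ground_subst \<sigma> \<and> subst_dom \<sigma> = V_rule \<rho>) \<and>
     (\<forall>\<pi> \<in> set \<pi>s. \<forall>t \<in> set \<pi>. safe_tt R t)"

definition safe_trace :: "('l \<times> ('f, 'v) crule) set \<Rightarrow> ('l, 'f, 'v) trace \<Rightarrow> bool" where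
  "safe_trace R \<pi> \<longleftrightarrow> (\<forall>t \<in> set \<pi>. safe_tt R t)"

type_synonym ('l, 'f, 'v) tpair = "('f, 'v) term \<times> ('l, 'f, 'v) trace"

definition safe_pair :: "('l \<times> ('f, 'v) crule) set \<Rightarrow> ('l, 'f, 'v) tpair \<Rightarrow> bool" where
  "safe_pair R sp \<longleftrightarrow> ground (fst sp) \<and> safe_trace R (snd sp)"

fun fwd :: "('l \<times> ('f, 'v) crule) set \<Rightarrow> nat \<Rightarrow> (('l, 'f, 'v) tpair \<times> ('l, 'f, 'v) tpair) set" where
  "fwd R 0 = {}"
| "fwd R (Suc k) = {((s, \<pi>), (t, TT \<beta> p \<sigma>' \<pi>s # \<pi>)) | s \<pi> t \<beta> p \<sigma>' \<pi>s.
     safe_pair R (s, \<pi>) \<and> safe_pair R (t, TT \<beta> p \<sigma>' \<pi>s # \<pi>) \<and>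
     (\<exists>\<rho> \<sigma>. (\<beta>, \<rho>) \<in> R \<and> p \<in> poss s \<and> ground_subst \<sigma> \<and>
        subt_at s p = lhs \<rho> \<cdot> \<sigma> \<and>
        length \<pi>s = length (conds \<rho>) \<and>
        (\<forall>i < length (conds \<rho>).
           ((fst (conds \<rho> ! i) \<cdot> \<sigma>, []), (snd (conds \<rho> ! i) \<cdot> \<sigma>, \<pi>s ! i)) \<in> (fwd R k)\<^sup>*) \<and>
        t = replace_at s p (rhs \<rho> \<cdot> \<sigma>) \<and>
        \<sigma>' = subst_restrict \<sigma> (V_rule \<rho>))}"

fun bwd :: "('l \<times> ('f, 'v) crule) set \<Rightarrow> nat \<Rightarrow> (('l, 'f, 'v) tpair \<times> ('l, 'f, 'v) tpair) set" where
  "bwd R 0 = {}"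
| "bwd R (Suc k) = {((t, TT \<beta> p \<sigma>' \<pi>s # \<pi>), (s, \<pi>)) | t \<beta> p \<sigma>' \<pi>s \<pi> s.
     safe_pair R (t, TT \<beta> p \<sigma>' \<pi>s # \<pi>) \<and> safe_pair R (s, \<pi>) \<and>
     (\<exists>\<rho> \<theta>. (\<beta>, \<rho>) \<in> R \<and> length \<pi>s = length (conds \<rho>) \<and>
        ground_subst \<theta> \<and>
        subst_dom \<theta> = vars_terms (rhs \<rho> # map fst (conds \<rho>)) - subst_dom \<sigma>' \<and>
        p \<in> poss t \<and> subt_at t p = rhs \<rho> \<cdot> \<theta> \<and>
        (\<forall>i < length (conds \<rho>).
           ((snd (conds \<rho> ! i) \<cdot> \<theta> \<cdot> \<sigma>', \<pi>s ! i), (fst (conds \<rho> ! i) \<cdot> \<theta> \<cdot> \<sigma>', [])) \<in> (bwd R k)\<^sup>*) \<and>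
        s = replace_at t p (lhs \<rho> \<cdot> \<theta> \<cdot> \<sigma>'))}"

end

theory Submission
  imports Defs
begin

text \<open>A forward step with matcher \<sigma> stores only \<sigma>' = \<sigma>|V_\<beta> in the trace. Every
  variable of the rule lies in V_\<beta> or in r, s_1, ..., s_n, and since the rule is deterministic
  and the terms are ground, \<sigma> grounds all of r, s_1, ..., s_n. Hence \<theta> := \<sigma> restricted to the
  remaining variables is a valid backward matcher with \<theta>\<sigma>' = \<sigma> on the rule; conversely the
  composition \<theta>\<sigma>' of a backward step is a forward matcher. By induction on the depth k, the
  forward relation is the converse of the backward one, and converses commute with powers.\<close>

lemma converse_relpow: "((r :: ('a \<times> 'a) set)\<inverse>) ^^ m = (r ^^ m)\<inverse>"
proof (induction m)
  case (Suc m)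
  have "(r\<inverse>) ^^ Suc m = (r ^^ m)\<inverse> O r\<inverse>"
    using Suc by simp
  also have "\<dots> = (r O r ^^ m)\<inverse>"
    by (rule converse_relcomp[symmetric])
  finally show ?case
    by (simp add: relpow_commute)
qed simp

lemma subst_apply_comp: "t \<cdot> \<theta> \<cdot> \<sigma> = t \<cdot> (\<lambda>x. \<theta> x \<cdot> \<sigma>)"
  by (induction t) auto

lemma subst_apply_cong: "(\<And>x. x \<in> vars_term t \<Longrightarrow> \<sigma> x = \<tau> x) \<Longrightarrow> t \<cdot> \<sigma> = t \<cdot> \<tau>"
  by (induction t) auto

lemma subst_apply_ground: "ground t \<Longrightarrow> t \<cdot> \<sigma> = t"
  unfolding ground_def by (induction t) (auto intro: map_idI)

lemma vars_term_subst_apply: "vars_term (t \<cdot> \<sigma>) = (\<Union>x \<in> vars_term t. vars_term (\<sigma> x))"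
  by (induction t) auto

lemma ground_subst_apply_iff:
  "ground_subst \<sigma> \<Longrightarrow> ground (t \<cdot> \<sigma>) \<longleftrightarrow> vars_term t \<subseteq> subst_dom \<sigma>"
proof
  assume "ground (t \<cdot> \<sigma>)"
  then show "vars_term t \<subseteq> subst_dom \<sigma>"
    unfolding ground_def subst_dom_def vars_term_subst_apply by fastforce
next
  assume "ground_subst \<sigma>" "vars_term t \<subseteq> subst_dom \<sigma>"
  then show "ground (t \<cdot> \<sigma>)"
    unfolding ground_def ground_subst_def vars_term_subst_apply by blast
qed

lemma subst_dom_subst_restrict: "W \<subseteq> subst_dom \<sigma> \<Longrightarrow> subst_dom (subst_restrict \<sigma> W) = W"
  unfolding subst_dom_def subst_restrict_def by auto

lemma ground_subst_restrict: "ground_subst \<sigma> \<Longrightarrow> ground_subst (subst_restrict \<sigma> W)"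
  unfolding ground_subst_def subst_dom_def subst_restrict_def by auto

lemma ground_subst_comp:
  "ground_subst \<theta> \<Longrightarrow> ground_subst \<sigma> \<Longrightarrow> ground_subst (\<lambda>x. \<theta> x \<cdot> \<sigma>)"
  unfolding ground_subst_def subst_dom_def
  by (metis (mono_tags, lifting) mem_Collect_eq subst_apply.simps(1) subst_apply_ground)

lemma subst_apply_restrict_restrict:
  assumes "ground_subst \<sigma>" "W \<subseteq> subst_dom \<sigma>" "vars_term u \<subseteq> V \<union> W"
  shows "u \<cdot> subst_restrict \<sigma> W \<cdot> subst_restrict \<sigma> V = u \<cdot> \<sigma>"
  unfolding subst_apply_comp
proof (rule subst_apply_cong)
  fix x assume "x \<in> vars_term u"
  then show "subst_restrict \<sigma> W x \<cdot> subst_restrict \<sigma> V = \<sigma> x"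
    using assms unfolding ground_subst_def subst_restrict_def by (auto simp: subst_apply_ground)
qed

lemma subst_restrict_comp_dom:
  assumes "subst_dom \<theta> \<inter> subst_dom \<sigma> = {}"
  shows "subst_restrict (\<lambda>x. \<theta> x \<cdot> \<sigma>) (subst_dom \<sigma>) = \<sigma>"
proof
  fix x
  show "subst_restrict (\<lambda>x. \<theta> x \<cdot> \<sigma>) (subst_dom \<sigma>) x = \<sigma> x"
  proof (cases "x \<in> subst_dom \<sigma>")
    case True
    then have "\<theta> x = Var x" using assms by (auto simp: subst_dom_def)
    then show ?thesis using True by (simp add: subst_restrict_def)
  qed (simp add: subst_restrict_def subst_dom_def)
qed

lemma poss_Fun_Cons_iff: "i # q \<in> poss (Fun f ts) \<longleftrightarrow> i < length ts \<and> q \<in> poss (ts ! i)"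
  by (force simp: in_set_zip)

lemma Nil_in_poss [simp]: "[] \<in> poss t"
  by (cases t) auto

declare poss.simps(2) [simp del] poss_Fun_Cons_iff [simp]

lemma subt_at_replace_at: "p \<in> poss s \<Longrightarrow> subt_at (replace_at s p u) p = u"
  by (induction s p u rule: replace_at.induct) auto

lemma poss_replace_at: "p \<in> poss s \<Longrightarrow> p \<in> poss (replace_at s p u)"
  by (induction s p u rule: replace_at.induct) auto

lemma replace_at_replace_at:
  "p \<in> poss s \<Longrightarrow> replace_at (replace_at s p u) p v = replace_at s p v"
  by (induction s p u rule: replace_at.induct) auto

lemma replace_at_subt_at: "p \<in> poss s \<Longrightarrow> replace_at s p (subt_at s p) = s"
  by (induction s p rule: subt_at.induct) auto

lemma vars_term_subt_at: "p \<in> poss s \<Longrightarrow> vars_term (subt_at s p) \<subseteq> vars_term s"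
  by (induction s p rule: subt_at.induct) (auto, meson nth_mem subsetD)

lemma ground_subt_at: "ground s \<Longrightarrow> p \<in> poss s \<Longrightarrow> ground (subt_at s p)"
  using vars_term_subt_at unfolding ground_def by blast

lemma vars_terms_Cons [simp]: "vars_terms (t # ts) = vars_term t \<union> vars_terms ts"
  by (simp add: vars_terms_def)

lemma vars_terms_map: "vars_terms (map f xs) = (\<Union>i < length xs. vars_term (f (xs ! i)))"
  by (auto simp: vars_terms_def in_set_conv_nth intro: nth_mem)

lemma vars_rhs_disjoint_V_rule: "vars_term (rhs \<rho>) \<inter> V_rule \<rho> = {}"
  unfolding V_rule_def Let_def vars_terms_def by auto

lemma vars_cond_snd_subset_V_rule:
  "i < length (conds \<rho>) \<Longrightarrow>
   vars_term (snd (conds \<rho> ! i)) \<subseteq> V_rule \<rho> \<union> vars_terms (rhs \<rho> # map fst (conds \<rho>))"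
  unfolding V_rule_def Let_def vars_terms_def by (auto dest: in_set_dropD)

lemma vars_lhs_subset_V_rule:
  "vars_term (lhs \<rho>) \<subseteq> V_rule \<rho> \<union> vars_terms (rhs \<rho> # map fst (conds \<rho>))"
proof
  fix x assume x: "x \<in> vars_term (lhs \<rho>)"
  show "x \<in> V_rule \<rho> \<union> vars_terms (rhs \<rho> # map fst (conds \<rho>))"
  proof (cases "\<exists>i < length (conds \<rho>). x \<in> vars_term (snd (conds \<rho> ! i))")
    case True
    then show ?thesis using vars_cond_snd_subset_V_rule by blast
  next
    case False
    then have "x \<notin> vars_terms (map snd (conds \<rho>))"
      by (simp add: vars_terms_map)
    then show ?thesis
      using x unfolding V_rule_def Let_def vars_terms_def by auto
  qed
qed

lemma rule_matcher_split:
  fixes \<rho> :: "('f, 'v) crule"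
  defines "W \<equiv> vars_terms (rhs \<rho> # map fst (conds \<rho>)) - V_rule \<rho>"
  assumes \<sigma>: "ground_subst \<sigma>" and W: "W \<subseteq> subst_dom \<sigma>"
  shows "ground_subst (subst_restrict \<sigma> W)" "subst_dom (subst_restrict \<sigma> W) = W"
    and "rhs \<rho> \<cdot> subst_restrict \<sigma> W = rhs \<rho> \<cdot> \<sigma>"
    and "u \<in> set (lhs \<rho> # map fst (conds \<rho>) @ map snd (conds \<rho>)) \<Longrightarrow>
         u \<cdot> subst_restrict \<sigma> W \<cdot> subst_restrict \<sigma> (V_rule \<rho>) = u \<cdot> \<sigma>"
proof -
  show "ground_subst (subst_restrict \<sigma> W)" "subst_dom (subst_restrict \<sigma> W) = W"
    using \<sigma> W by (simp_all add: ground_subst_restrict subst_dom_subst_restrict)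
  show "rhs \<rho> \<cdot> subst_restrict \<sigma> W = rhs \<rho> \<cdot> \<sigma>"
    using vars_rhs_disjoint_V_rule[of \<rho>]
    by (intro subst_apply_cong) (auto simp: W_def subst_restrict_def)
  assume "u \<in> set (lhs \<rho> # map fst (conds \<rho>) @ map snd (conds \<rho>))"
  then consider "u = lhs \<rho>"
    | i where "i < length (conds \<rho>)" "u = fst (conds \<rho> ! i)"
    | i where "i < length (conds \<rho>)" "u = snd (conds \<rho> ! i)"
    by (auto simp: in_set_conv_nth)
  then have "vars_term u \<subseteq> V_rule \<rho> \<union> W"
  proof cases
    case 1
    then show ?thesis using vars_lhs_subset_V_rule[of \<rho>] by (auto simp: W_def)
  next
    case 2
    then show ?thesis by (auto simp: W_def vars_terms_map)
  next
    case 3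
    then show ?thesis using vars_cond_snd_subset_V_rule[of _ \<rho>] by (auto simp: W_def)
  qed
  then show "u \<cdot> subst_restrict \<sigma> W \<cdot> subst_restrict \<sigma> (V_rule \<rho>) = u \<cdot> \<sigma>"
    using subst_apply_restrict_restrict[OF \<sigma> W] by blast
qed

text \<open>Each s_i only uses variables of l and of t_1, ..., t_{i-1}, so groundness propagates
  from condition to condition.\<close>
lemma dctrs_rule_vars_conds_subset:
  assumes "dctrs_rule \<rho>" "ground_subst \<sigma>" "vars_term (lhs \<rho>) \<subseteq> subst_dom \<sigma>"
    and "\<And>i. i < length (conds \<rho>) \<Longrightarrow> ground (fst (conds \<rho> ! i) \<cdot> \<sigma>) \<Longrightarrow>
           ground (snd (conds \<rho> ! i) \<cdot> \<sigma>)"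
    and "i < length (conds \<rho>)"
  shows "vars_term (fst (conds \<rho> ! i)) \<subseteq> subst_dom \<sigma> \<and>
         vars_term (snd (conds \<rho> ! i)) \<subseteq> subst_dom \<sigma>"
  using assms(5)
proof (induction i rule: less_induct)
  case (less i)
  have "vars_term (fst (conds \<rho> ! i)) \<subseteq> vars_terms (lhs \<rho> # map snd (take i (conds \<rho>)))"
    using assms(1) less.prems by (auto simp: dctrs_rule_def)
  also have "\<dots> \<subseteq> subst_dom \<sigma>"
    using less.IH less.prems assms(3)
    unfolding vars_terms_def by (force simp: in_set_conv_nth)
  finally have "vars_term (fst (conds \<rho> ! i)) \<subseteq> subst_dom \<sigma>" .
  with assms(2,4) less.prems show ?case
    by (simp add: ground_subst_apply_iff)
qed

lemma fwd_rtrancl_ground: "(a, b) \<in> (fwd R k)\<^sup>* \<Longrightarrow> ground (fst a) \<Longrightarrow> ground (fst b)"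
proof (induction rule: rtrancl_induct)
  case (step b c)
  then show ?case by (cases k) (auto simp: safe_pair_def)
qed

lemma safe_pair_Cons_subst:
  assumes "dctrs R" "safe_pair R (t, TT \<beta> p \<sigma>' \<pi>s # \<pi>)" "(\<beta>, \<rho>) \<in> R"
  shows "ground_subst \<sigma>' \<and> subst_dom \<sigma>' = V_rule \<rho>"
proof -
  obtain \<rho>' where "(\<beta>, \<rho>') \<in> R" "ground_subst \<sigma>'" "subst_dom \<sigma>' = V_rule \<rho>'"
    using assms(2) by (auto simp: safe_pair_def safe_trace_def)
  moreover have "\<rho>' = \<rho>"
    using assms(1,3) \<open>(\<beta>, \<rho>') \<in> R\<close> unfolding dctrs_def by blast
  ultimately show ?thesis by simp
qed

lemma fwd_SucI:
  assumes "safe_pair R (s, \<pi>)" "safe_pair R (t, TT \<beta> p \<sigma>' \<pi>s # \<pi>)" "(\<beta>, \<rho>) \<in> R"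
    and "p \<in> poss s" "ground_subst \<sigma>" "subt_at s p = lhs \<rho> \<cdot> \<sigma>"
    and "length \<pi>s = length (conds \<rho>)"
    and "\<And>i. i < length (conds \<rho>) \<Longrightarrow>
           ((fst (conds \<rho> ! i) \<cdot> \<sigma>, []), (snd (conds \<rho> ! i) \<cdot> \<sigma>, \<pi>s ! i)) \<in> (fwd R k)\<^sup>*"
    and "t = replace_at s p (rhs \<rho> \<cdot> \<sigma>)" "\<sigma>' = subst_restrict \<sigma> (V_rule \<rho>)"
  shows "((s, \<pi>), (t, TT \<beta> p \<sigma>' \<pi>s # \<pi>)) \<in> fwd R (Suc k)"
  using assms by (simp only: fwd.simps mem_Collect_eq) blast

lemma bwd_SucI:
  assumes "safe_pair R (t, TT \<beta> p \<sigma>' \<pi>s # \<pi>)" "safe_pair R (s, \<pi>)" "(\<beta>, \<rho>) \<in> R"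
    and "length \<pi>s = length (conds \<rho>)" "ground_subst \<theta>"
    and "subst_dom \<theta> = vars_terms (rhs \<rho> # map fst (conds \<rho>)) - subst_dom \<sigma>'"
    and "p \<in> poss t" "subt_at t p = rhs \<rho> \<cdot> \<theta>"
    and "\<And>i. i < length (conds \<rho>) \<Longrightarrow>
           ((snd (conds \<rho> ! i) \<cdot> \<theta> \<cdot> \<sigma>', \<pi>s ! i), (fst (conds \<rho> ! i) \<cdot> \<theta> \<cdot> \<sigma>', [])) \<in> (bwd R k)\<^sup>*"
    and "s = replace_at t p (lhs \<rho> \<cdot> \<theta> \<cdot> \<sigma>')"
  shows "((t, TT \<beta> p \<sigma>' \<pi>s # \<pi>), (s, \<pi>)) \<in> bwd R (Suc k)"
  using assms by (simp only: bwd.simps mem_Collect_eq) blast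

lemma bwd_Suc_if_fwd_Suc:
  assumes R: "dctrs R" and IH: "fwd R k = (bwd R k)\<inverse>"
    and step: "((s, \<pi>), (t, \<pi>')) \<in> fwd R (Suc k)"
  shows "((t, \<pi>'), (s, \<pi>)) \<in> bwd R (Suc k)"
proof -
  from step obtain \<beta> p \<sigma>' \<pi>s \<rho> \<sigma> where \<pi>': "\<pi>' = TT \<beta> p \<sigma>' \<pi>s # \<pi>"
    and safe_s: "safe_pair R (s, \<pi>)" and safe_t: "safe_pair R (t, TT \<beta> p \<sigma>' \<pi>s # \<pi>)"
    and \<rho>: "(\<beta>, \<rho>) \<in> R" and p: "p \<in> poss s" and \<sigma>: "ground_subst \<sigma>"
    and lhs: "subt_at s p = lhs \<rho> \<cdot> \<sigma>" and len: "length \<pi>s = length (conds \<rho>)"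
    and conds: "\<forall>i < length (conds \<rho>).
      ((fst (conds \<rho> ! i) \<cdot> \<sigma>, []), (snd (conds \<rho> ! i) \<cdot> \<sigma>, \<pi>s ! i)) \<in> (fwd R k)\<^sup>*"
    and t: "t = replace_at s p (rhs \<rho> \<cdot> \<sigma>)" and \<sigma>': "\<sigma>' = subst_restrict \<sigma> (V_rule \<rho>)"
    by auto
  define W where "W = vars_terms (rhs \<rho> # map fst (conds \<rho>)) - V_rule \<rho>"
  define \<theta> where "\<theta> = subst_restrict \<sigma> W"
  have dom_\<sigma>': "subst_dom \<sigma>' = V_rule \<rho>"
    using safe_pair_Cons_subst[OF R safe_t \<rho>] by simp
  have p_t: "p \<in> poss t" and rhs_t: "subt_at t p = rhs \<rho> \<cdot> \<sigma>"
    using t p by (simp_all add: poss_replace_at subt_at_replace_at)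
  have "vars_term (lhs \<rho>) \<subseteq> subst_dom \<sigma>"
    using ground_subt_at[OF _ p] safe_s lhs \<sigma> by (simp add: safe_pair_def ground_subst_apply_iff)
  moreover have "dctrs_rule \<rho>"
    using R \<rho> unfolding dctrs_def by blast
  moreover have "ground (snd (conds \<rho> ! i) \<cdot> \<sigma>)"
    if "i < length (conds \<rho>)" "ground (fst (conds \<rho> ! i) \<cdot> \<sigma>)" for i
    using fwd_rtrancl_ground conds that by fastforce
  ultimately have vars_fst: "vars_term (fst (conds \<rho> ! i)) \<subseteq> subst_dom \<sigma>"
    if "i < length (conds \<rho>)" for i
    using dctrs_rule_vars_conds_subset[OF _ \<sigma>] that by blast
  have "vars_term (rhs \<rho>) \<subseteq> subst_dom \<sigma>"
    using ground_subt_at[OF _ p_t] safe_t rhs_t \<sigma> by (simp add: safe_pair_def ground_subst_apply_iff)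
  with vars_fst have W: "W \<subseteq> subst_dom \<sigma>"
    by (auto simp: W_def vars_terms_map)
  note split = rule_matcher_split[OF \<sigma> W[unfolded W_def], folded W_def \<theta>_def \<sigma>']
  have "((snd (conds \<rho> ! i) \<cdot> \<theta> \<cdot> \<sigma>', \<pi>s ! i), (fst (conds \<rho> ! i) \<cdot> \<theta> \<cdot> \<sigma>', []))
      \<in> (bwd R k)\<^sup>*" if "i < length (conds \<rho>)" for i
    using conds that split(4) by (simp add: IH rtrancl_converse)
  moreover have "s = replace_at t p (lhs \<rho> \<cdot> \<theta> \<cdot> \<sigma>')"
    using p split(4) by (simp add: t lhs[symmetric] replace_at_replace_at replace_at_subt_at)
  ultimately show ?thesis
    unfolding \<pi>' using safe_t safe_s \<rho> len p_t rhs_t split(1-3)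
    by (intro bwd_SucI) (simp_all add: W_def dom_\<sigma>')
qed

lemma fwd_Suc_if_bwd_Suc:
  assumes R: "dctrs R" and IH: "fwd R k = (bwd R k)\<inverse>"
    and step: "((t, \<pi>'), (s, \<pi>)) \<in> bwd R (Suc k)"
  shows "((s, \<pi>), (t, \<pi>')) \<in> fwd R (Suc k)"
proof -
  from step obtain \<beta> p \<sigma>' \<pi>s \<rho> \<theta> where \<pi>': "\<pi>' = TT \<beta> p \<sigma>' \<pi>s # \<pi>"
    and safe_s: "safe_pair R (s, \<pi>)" and safe_t: "safe_pair R (t, TT \<beta> p \<sigma>' \<pi>s # \<pi>)"
    and \<rho>: "(\<beta>, \<rho>) \<in> R" and len: "length \<pi>s = length (conds \<rho>)" and \<theta>: "ground_subst \<theta>"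
    and dom_\<theta>: "subst_dom \<theta> = vars_terms (rhs \<rho> # map fst (conds \<rho>)) - subst_dom \<sigma>'"
    and p_t: "p \<in> poss t" and rhs: "subt_at t p = rhs \<rho> \<cdot> \<theta>"
    and conds: "\<forall>i < length (conds \<rho>).
      ((snd (conds \<rho> ! i) \<cdot> \<theta> \<cdot> \<sigma>', \<pi>s ! i), (fst (conds \<rho> ! i) \<cdot> \<theta> \<cdot> \<sigma>', [])) \<in> (bwd R k)\<^sup>*"
    and s: "s = replace_at t p (lhs \<rho> \<cdot> \<theta> \<cdot> \<sigma>')"
    by auto
  define \<sigma> where "\<sigma> = (\<lambda>x. \<theta> x \<cdot> \<sigma>')"
  have \<sigma>': "ground_subst \<sigma>'" "subst_dom \<sigma>' = V_rule \<rho>"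
    using safe_pair_Cons_subst[OF R safe_t \<rho>] by simp_all
  have "subst_dom \<theta> \<inter> subst_dom \<sigma>' = {}"
    using dom_\<theta> by blast
  then have "\<sigma>' = subst_restrict \<sigma> (V_rule \<rho>)"
    using subst_restrict_comp_dom \<sigma>'(2) unfolding \<sigma>_def by metis
  moreover have "ground_subst \<sigma>"
    using \<theta> \<sigma>'(1) by (simp add: \<sigma>_def ground_subst_comp)
  moreover have p_s: "p \<in> poss s" and "subt_at s p = lhs \<rho> \<cdot> \<sigma>"
    using s p_t by (simp_all add: poss_replace_at subt_at_replace_at \<sigma>_def subst_apply_comp)
  moreover have "t = replace_at s p (rhs \<rho> \<cdot> \<sigma>)"
  proof -
    have "ground (rhs \<rho> \<cdot> \<theta>)"
      using ground_subt_at[OF _ p_t] safe_t rhs by (simp add: safe_pair_def)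
    then have "rhs \<rho> \<cdot> \<sigma> = subt_at t p"
      by (simp add: rhs \<sigma>_def subst_apply_ground flip: subst_apply_comp)
    then show ?thesis
      using p_t by (simp add: s replace_at_replace_at replace_at_subt_at)
  qed
  moreover have "((fst (conds \<rho> ! i) \<cdot> \<sigma>, []), (snd (conds \<rho> ! i) \<cdot> \<sigma>, \<pi>s ! i)) \<in> (fwd R k)\<^sup>*"
    if "i < length (conds \<rho>)" for i
    using conds that by (simp add: IH rtrancl_converse \<sigma>_def flip: subst_apply_comp)
  ultimately show ?thesis
    unfolding \<pi>' using safe_s safe_t \<rho> len by (intro fwd_SucI) simp_all
qed

lemma fwd_eq_converse_bwd: "dctrs R \<Longrightarrow> fwd R k = (bwd R k)\<inverse>"
proof (induction k)
  case (Suc k)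
  show ?case
    using bwd_Suc_if_fwd_Suc[OF Suc.prems Suc.IH[OF Suc.prems]]
      fwd_Suc_if_bwd_Suc[OF Suc.prems Suc.IH[OF Suc.prems]]
    by (auto simp del: fwd.simps bwd.simps)
qed simp

theorem mainTheorem10:
  fixes R :: "('l \<times> ('f, 'v) crule) set"
    and s t :: "('f, 'v) term" and \<pi> \<pi>' :: "('l, 'f, 'v) trace"
    and k m :: nat
  assumes "dctrs R"
    and "safe_pair R (s, \<pi>)"
    and "safe_pair R (t, \<pi>')"
  shows "((s, \<pi>), (t, \<pi>')) \<in> fwd R k ^^ m \<longleftrightarrow> ((t, \<pi>'), (s, \<pi>)) \<in> bwd R k ^^ m"
  by (simp add: fwd_eq_converse_bwd[OF assms(1)] converse_relpow)

end
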